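(* Let $d\ge1$, $N=2^d$, $Q\ge 1$, and let $\Omega=\{(x,y,m):0\le x\le 1,\ 0<m\le y\le Qm\}$. Say a function $B:\Omega\to\mathbb{R}$ satisfies the main inequality at level $m$ if \[ B(x,y,m)\ge \frac1N\sum_{i=1}^N B(x_i,y_i,m_i) \] whenever $(x,y,m)\in\Omega$, $(x_i,y_i,m_i)\in\Omega$ for $i=1,\dots,N$, $\frac1N\sum x_i=x$, $\frac1N\sum y_i=y$ and $\min_i m_i=m$. Suppose $B$ satisfies the main inequality at level $m=1$ and the homogeneity property $B(x,\lambda y,\lambda m)=\lambda B(x,y,m)$ for all $\lambda>0$ and $(x,y,m)\in\Omega$. Then $B$ satisfies the main inequality at every level $m>0$. *)

theory Defs
  imports Complex_Main
begin

definition Omega :: "real \<Rightarrow> (real \<times> real \<times> real) set" where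
  "Omega Q = {(x, y, m). 0 \<le> x \<and> x \<le> 1 \<and> 0 < m \<and> m \<le> y \<and> y \<le> Q * m}"

definition main_ineq_at ::
  "nat \<Rightarrow> real \<Rightarrow> (real \<Rightarrow> real \<Rightarrow> real \<Rightarrow> real) \<Rightarrow> real \<Rightarrow> bool" where
  "main_ineq_at d Q B m \<longleftrightarrow>
     (\<forall>x y (xs :: nat \<Rightarrow> real) (ys :: nat \<Rightarrow> real) (ms :: nat \<Rightarrow> real).
        (x, y, m) \<in> Omega Q \<and>
        (\<forall>i < 2 ^ d. (xs i, ys i, ms i) \<in> Omega Q) \<and>
        (\<Sum>i<2 ^ d. xs i) / 2 ^ d = x \<and>
        (\<Sum>i<2 ^ d. ys i) / 2 ^ d = y \<and>
        (MIN i\<in>{..<2 ^ d}. ms i) = m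
        \<longrightarrow> B x y m \<ge> (\<Sum>i<2 ^ d. B (xs i) (ys i) (ms i)) / 2 ^ d)"

end

theory Submission
  imports Defs
begin

text \<open>The constraints defining Omega, the averaging conditions and the minimum condition are all
  invariant under the dilation (y, m) \<mapsto> (c y, c m) with c > 0, and by homogeneity B is multiplied
  by c. Hence the main inequality transfers from level m to level c m, and every level m > 0 is
  reached from level 1.\<close>

lemma Omega_dilate_iff:
  assumes "c > 0"
  shows "(x, c * y, c * m) \<in> Omega Q \<longleftrightarrow> (x, y, m) \<in> Omega Q"
  using assms by (auto simp: Omega_def mult.left_commute[of Q] zero_less_mult_iff)

lemma Min_mult_left:
  fixes f :: "'a \<Rightarrow> real"
  assumes "finite A" "A \<noteq> {}" "c > 0"
  shows "(MIN i\<in>A. c * f i) = c * (MIN i\<in>A. f i)"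
proof -
  have "mono (\<lambda>t::real. c * t)"
    using assms(3) by (auto simp: mono_def)
  from mono_Min_commute[OF this, of "f ` A"] assms(1,2) show ?thesis
    by (simp add: image_image)
qed

lemma main_ineq_at_dilate:
  assumes ineq: "main_ineq_at d Q B m" and "c > 0"
    and hom: "\<And>x y m. (x, y, m) \<in> Omega Q \<Longrightarrow> B x (c * y) (c * m) = c * B x y m"
  shows "main_ineq_at d Q B (c * m)"
  unfolding main_ineq_at_def
proof (intro allI impI, elim conjE)
  fix x y and xs ys ms :: "nat \<Rightarrow> real"
  let ?I = "{..<(2::nat) ^ d}"
  assume O: "(x, y, c * m) \<in> Omega Q" and Os: "\<forall>i<2 ^ d. (xs i, ys i, ms i) \<in> Omega Q"
    and avg_x: "(\<Sum>i<2 ^ d. xs i) / 2 ^ d = x" and avg_y: "(\<Sum>i<2 ^ d. ys i) / 2 ^ d = y"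
    and min_m: "(MIN i\<in>?I. ms i) = c * m"
  define ys' ms' where "ys' i = ys i / c" and "ms' i = ms i / c" for i
  have ys: "ys i = c * ys' i" and ms: "ms i = c * ms' i" for i
    using \<open>c > 0\<close> by (simp_all add: ys'_def ms'_def)
  have O': "(x, y / c, m) \<in> Omega Q"
    using O Omega_dilate_iff[OF \<open>c > 0\<close>, of x "y / c" m] \<open>c > 0\<close> by simp
  have Os': "\<forall>i<2 ^ d. (xs i, ys' i, ms' i) \<in> Omega Q"
    using Os Omega_dilate_iff[OF \<open>c > 0\<close>] by (simp add: ys ms)
  have avg_y': "(\<Sum>i<2 ^ d. ys' i) / 2 ^ d = y / c"
    using avg_y \<open>c > 0\<close> by (auto simp: ys sum_distrib_left[symmetric] field_simps)
  have "c * (MIN i\<in>?I. ms' i) = c * m"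
    using min_m Min_mult_left[of ?I c ms'] \<open>c > 0\<close> by (simp add: ms lessThan_empty_iff)
  then have min_m': "(MIN i\<in>?I. ms' i) = m"
    using \<open>c > 0\<close> by simp
  have "(\<Sum>i<2 ^ d. B (xs i) (ys' i) (ms' i)) / 2 ^ d \<le> B x (y / c) m"
    using ineq O' Os' avg_x avg_y' min_m' unfolding main_ineq_at_def by blast
  then have "c * ((\<Sum>i<2 ^ d. B (xs i) (ys' i) (ms' i)) / 2 ^ d) \<le> c * B x (y / c) m"
    using \<open>c > 0\<close> by (simp add: mult_left_mono del: times_divide_eq_right)
  moreover have "c * B x (y / c) m = B x y (c * m)"
    using hom[OF O'] \<open>c > 0\<close> by simp
  moreover have "c * ((\<Sum>i<2 ^ d. B (xs i) (ys' i) (ms' i)) / 2 ^ d)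
      = (\<Sum>i<2 ^ d. B (xs i) (ys i) (ms i)) / 2 ^ d"
    using Os' hom by (simp add: ys ms sum_distrib_left)
  ultimately show "(\<Sum>i<2 ^ d. B (xs i) (ys i) (ms i)) / 2 ^ d \<le> B x y (c * m)"
    by simp
qed

theorem mainTheorem3:
  fixes d :: nat and Q :: real and B :: "real \<Rightarrow> real \<Rightarrow> real \<Rightarrow> real"
  assumes "d \<ge> 1" and "Q \<ge> 1"
    and "main_ineq_at d Q B 1"
    and "\<And>l x y m. l > 0 \<Longrightarrow> (x, y, m) \<in> Omega Q \<Longrightarrow>
           B x (l * y) (l * m) = l * B x y m"
  shows "\<forall>m > 0. main_ineq_at d Q B m"
proof (intro allI impI)
  fix m :: real
  assume "m > 0"
  from main_ineq_at_dilate[OF assms(3) this assms(4)[OF this]]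
  show "main_ineq_at d Q B m" by simp
qed

end
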